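(* Let $b>1$ be an integer and let $\mathcal{A}$ be a minimal complete deterministic automaton over $A_b=\{0,\ldots,b-1\}$. Let $\ell+1$ be the number of states of $\mathcal{A}$ that belong to $0$-circuits. Then $\mathcal{A}$ accepts by value an impurely periodic set of integers if and only if the following three conditions hold: (a) there exists a pseudo-morphism $\phi:\mathcal{A}\to\mathcal{A}_{?,\ell}$ (this condition is understood to fail if $\ell=0$, since $\mathcal{A}_{?,0}$ is not defined); (b) for all states $s,s'$ of $\mathcal{A}$ distinct from the initial state, if $\phi(s)=\phi(s')$ then $s$ and $s'$ are ultimately-equivalent; (c) the initial state bears a self-loop labelled by the digit $0$ and has no other incoming transitions.
   Context: For $u=u_\ell\cdots u_0\in A_b^*$, $\mathrm{val}(u)=\sum_i u_i b^i$. An automaton accepts by value a set $X\subseteq\mathbb{N}$ if for every word $u$, $u$ is accepted iff $\mathrm{val}(u)\in X$. A set $P\subseteq\mathbb{N}$ is purely periodic if $P=R+p\mathbb{N}$ for some $p\ge1$ and $R\subseteq\{0,\ldots,p-1\}$; a set is eventually periodic if there exist $p\ge1$, $N\ge0$ with $x\in X\iff x+p\in X$ for all $x\ge N$; it is impurely periodic if it is eventually periodic but not purely periodic. $s\cdot u$ denotes the state reached from $s$ by reading $u$. A $0$-circuit is a circuit all of whose transitions are labelled $0$. For $q\ge1$, $\mathcal{A}_{?,q}$ is the complete deterministic automaton over $A_b$ with states $\{0,\ldots,q-1\}$, initial state $0$, transitions $n\xrightarrow{a}(nb+a)\bmod q$, and no specified final states. A pseudo-morphism $\mathcal{A}\to\mathcal{M}$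 between complete deterministic automata is a map $\phi$ on states sending initial state to initial state with $\phi(s\cdot a)=\phi(s)\cdot a$ for all states $s$ and letters $a$. Two states $s,s'$ are ultimately-equivalent if there is $m\ge1$ with $s\cdot u=s'\cdot u$ for all words $u$ with $|u|\ge m$. *)

theory Defs
  imports Main
begin

text \<open>Words over A_b = {0,...,b-1} are lists of digits, written most significant
digit first: the list [u_l, ..., u_0] represents u = u_l ... u_0.\<close>

definition is_word :: "nat \<Rightarrow> nat list \<Rightarrow> bool" where
  "is_word b u \<longleftrightarrow> set u \<subseteq> {0..<b}"

definition val :: "nat \<Rightarrow> nat list \<Rightarrow> nat" where
  "val b u = (\<Sum>i<length u. rev u ! i * b ^ i)"

definition complete_dfa :: "nat \<Rightarrow> 'q set \<Rightarrow> 'q \<Rightarrow> ('q \<Rightarrow> nat \<Rightarrow> 'q) \<Rightarrow> 'q set \<Rightarrow> bool" where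
  "complete_dfa b Q i delta F \<longleftrightarrow> finite Q \<and> i \<in> Q \<and> F \<subseteq> Q \<and>
     (\<forall>s\<in>Q. \<forall>a<b. delta s a \<in> Q)"

definition run :: "('q \<Rightarrow> nat \<Rightarrow> 'q) \<Rightarrow> 'q \<Rightarrow> nat list \<Rightarrow> 'q" where
  "run delta s u = foldl delta s u"

definition minimal_dfa :: "nat \<Rightarrow> 'q set \<Rightarrow> 'q \<Rightarrow> ('q \<Rightarrow> nat \<Rightarrow> 'q) \<Rightarrow> 'q set \<Rightarrow> bool" where
  "minimal_dfa b Q i delta F \<longleftrightarrow> complete_dfa b Q i delta F \<and>
     (\<forall>s\<in>Q. \<exists>u. is_word b u \<and> run delta i u = s) \<and>
     (\<forall>s\<in>Q. \<forall>t\<in>Q. s \<noteq> t \<longrightarrow>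
        (\<exists>u. is_word b u \<and> (run delta s u \<in> F) \<noteq> (run delta t u \<in> F)))"

definition accepts_by_value :: "nat \<Rightarrow> 'q \<Rightarrow> ('q \<Rightarrow> nat \<Rightarrow> 'q) \<Rightarrow> 'q set \<Rightarrow> nat set \<Rightarrow> bool" where
  "accepts_by_value b i delta F X \<longleftrightarrow>
     (\<forall>u. is_word b u \<longrightarrow> (run delta i u \<in> F \<longleftrightarrow> val b u \<in> X))"

definition purely_periodic :: "nat set \<Rightarrow> bool" where
  "purely_periodic P \<longleftrightarrow> (\<exists>p R. p \<ge> 1 \<and> R \<subseteq> {0..<p} \<and> P = {r + p * k | r k. r \<in> R})"

definition eventually_periodic :: "nat set \<Rightarrow> bool" where
  "eventually_periodic X \<longleftrightarrow> (\<exists>p N. p \<ge> 1 \<and> (\<forall>x\<ge>N. x \<in> X \<longleftrightarrow> x + p \<in> X))"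

definition impurely_periodic :: "nat set \<Rightarrow> bool" where
  "impurely_periodic X \<longleftrightarrow> eventually_periodic X \<and> \<not> purely_periodic X"

definition zero_circuit_states :: "'q set \<Rightarrow> ('q \<Rightarrow> nat \<Rightarrow> 'q) \<Rightarrow> 'q set" where
  "zero_circuit_states Q delta = {s\<in>Q. \<exists>n\<ge>1. run delta s (replicate n 0) = s}"

text \<open>Pseudo-morphism from the automaton to A_{?,q} (states {0..<q}, initial 0,
transitions n -a-> (n*b+a) mod q).\<close>
definition pseudo_morphism_mod ::
  "nat \<Rightarrow> 'q set \<Rightarrow> 'q \<Rightarrow> ('q \<Rightarrow> nat \<Rightarrow> 'q) \<Rightarrow> nat \<Rightarrow> ('q \<Rightarrow> nat) \<Rightarrow> bool" where
  "pseudo_morphism_mod b Q i delta q phi \<longleftrightarrow> q \<ge> 1 \<and>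
     (\<forall>s\<in>Q. phi s < q) \<and> phi i = 0 \<and>
     (\<forall>s\<in>Q. \<forall>a<b. phi (delta s a) = (phi s * b + a) mod q)"

definition ultimately_equivalent :: "nat \<Rightarrow> ('q \<Rightarrow> nat \<Rightarrow> 'q) \<Rightarrow> 'q \<Rightarrow> 'q \<Rightarrow> bool" where
  "ultimately_equivalent b delta s s' \<longleftrightarrow>
     (\<exists>m\<ge>1. \<forall>u. is_word b u \<and> length u \<ge> m \<longrightarrow> run delta s u = run delta s' u)"

end

theory Submission
  imports Defs "HOL-Number_Theory.Residues"
begin

text \<open>With a 0-loop at the initial state, the state reached on any word depends only on its
  value, so there is a map \<open>reach\<close> from numbers to states, and minimality identifies two numbers
  exactly when they have the same futures in the accepted set \<open>X\<close>. Let \<open>X\<close> be impurely periodic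
  with least period \<open>p\<close>, and let \<open>q\<close> be the largest divisor of \<open>p\<close> coprime to \<open>b\<close>. If
  \<open>reach m = reach m'\<close> with \<open>0 < m' < m\<close>, then \<open>(m - m') * b ^ k\<close> is an eventual period of \<open>X\<close>,
  hence \<open>q\<close> divides \<open>m - m'\<close>; conversely, once enough digits are appended, numbers congruent
  mod \<open>q\<close> have equal futures. Thus \<open>n mod q\<close> induces a pseudo-morphism onto \<open>A_{?,q}\<close> whose
  fibres (away from the initial state) are ultimately equivalent, and since \<open>b\<close> is invertible
  mod \<open>q\<close> every residue is realised on a 0-circuit, exactly once, so \<open>q = \<ell>\<close>. A transition
  other than the 0-loop into the initial state would make \<open>X\<close> purely periodic.
  Conversely, a pseudo-morphism with ultimately equivalent fibres makes \<open>\<ell> * b ^ M\<close> an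
  eventual period, and an isolated initial state rules out a pure period \<open>p\<close>, since it would
  force \<open>reach p = reach 0\<close>.\<close>

section \<open>Words and their values\<close>

lemma val_Nil [simp]: "val b [] = 0"
  by (simp add: val_def)

lemma val_snoc: "val b (u @ [a]) = val b u * b + a"
proof -
  have "val b (u @ [a]) = (\<Sum>j<Suc (length u). (a # rev u) ! j * b ^ j)"
    by (simp add: val_def)
  also have "\<dots> = a + (\<Sum>j<length u. rev u ! j * b ^ Suc j)"
    by (subst sum.lessThan_Suc_shift) simp
  also have "\<dots> = a + b * val b u"
    by (simp add: val_def sum_distrib_left mult.assoc mult.left_commute)
  finally show ?thesis by simp
qed

lemma val_Cons: "val b (a # u) = a * b ^ length u + val b u"
proof -
  have "val b (a # u) = (\<Sum>j<Suc (length u). (rev u @ [a]) ! j * b ^ j)"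
    by (simp add: val_def)
  also have "\<dots> = (\<Sum>j<length u. (rev u @ [a]) ! j * b ^ j) + a * b ^ length u"
    by (simp add: nth_append)
  also have "(\<Sum>j<length u. (rev u @ [a]) ! j * b ^ j) = val b u"
    unfolding val_def by (rule sum.cong) (auto simp: nth_append)
  finally show ?thesis by simp
qed

lemma is_word_Nil [simp]: "is_word b []"
  by (simp add: is_word_def)

lemma is_word_snoc: "is_word b (u @ [a]) \<longleftrightarrow> is_word b u \<and> a < b"
  by (auto simp: is_word_def)

lemma val_less_power: "is_word b u \<Longrightarrow> val b u < b ^ length u"
proof (induction u rule: rev_induct)
  case (snoc a u)
  then have "val b u + 1 \<le> b ^ length u" "a < b"
    by (auto simp: is_word_snoc)
  then have "(val b u + 1) * b \<le> b ^ length u * b"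
    using mult_le_mono1 by blast
  then show ?case
    using \<open>a < b\<close> by (simp add: val_snoc algebra_simps)
qed simp

lemma run_Nil [simp]: "run delta s [] = s"
  by (simp add: run_def)

lemma run_snoc: "run delta s (u @ [a]) = delta (run delta s u) a"
  by (simp add: run_def)

lemma run_append: "run delta s (u @ v) = run delta (run delta s u) v"
  by (simp add: run_def)

lemma run_in_states:
  "complete_dfa b Q i delta F \<Longrightarrow> s \<in> Q \<Longrightarrow> is_word b u \<Longrightarrow> run delta s u \<in> Q"
  by (induction u rule: rev_induct) (auto simp: run_snoc is_word_snoc complete_dfa_def)

lemma run_replicate_mult:
  "run delta s (replicate j 0) = s \<Longrightarrow> run delta s (replicate (j * t) 0) = s"
  by (induction t) (simp_all add: replicate_add run_append)

fun base_digits :: "nat \<Rightarrow> nat \<Rightarrow> nat list" where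
  "base_digits b n = (if n = 0 \<or> b < 2 then [] else base_digits b (n div b) @ [n mod b])"

declare base_digits.simps [simp del]

lemma base_digits_step:
  "1 < b \<Longrightarrow> a < b \<Longrightarrow> n * b + a \<noteq> 0 \<Longrightarrow> base_digits b (n * b + a) = base_digits b n @ [a]"
  by (subst base_digits.simps) simp

lemma is_word_base_digits: "1 < b \<Longrightarrow> is_word b (base_digits b n)"
  by (induction b n rule: base_digits.induct) (subst base_digits.simps, auto simp: is_word_snoc)

lemma val_base_digits: "1 < b \<Longrightarrow> val b (base_digits b n) = n"
  by (induction b n rule: base_digits.induct) (subst base_digits.simps, auto simp: val_snoc)

fun padded_digits :: "nat \<Rightarrow> nat \<Rightarrow> nat \<Rightarrow> nat list" where
  "padded_digits b 0 r = []"
| "padded_digits b (Suc k) r = padded_digits b k (r div b) @ [r mod b]"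

lemma length_padded_digits [simp]: "length (padded_digits b k r) = k"
  by (induction k arbitrary: r) auto

lemma is_word_padded_digits: "0 < b \<Longrightarrow> is_word b (padded_digits b k r)"
  by (induction k arbitrary: r) (auto simp: is_word_snoc)

lemma val_padded_digits: "val b (padded_digits b k r) = r mod b ^ k"
  by (induction k arbitrary: r) (simp_all add: val_snoc mod_mult2_eq mult.commute)

section \<open>Eventual periods\<close>

definition period_from :: "nat set \<Rightarrow> nat \<Rightarrow> nat \<Rightarrow> bool" where
  "period_from X N c \<longleftrightarrow> 1 \<le> c \<and> (\<forall>x\<ge>N. x \<in> X \<longleftrightarrow> x + c \<in> X)"

definition least_period :: "nat set \<Rightarrow> nat" where
  "least_period X = (LEAST c. \<exists>N. period_from X N c)"

definition period_threshold :: "nat set \<Rightarrow> nat" where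
  "period_threshold X = (SOME N. period_from X N (least_period X))"

lemma period_from_least_period:
  assumes "eventually_periodic X"
  shows "period_from X (period_threshold X) (least_period X)"
proof -
  have "\<exists>c N. period_from X N c"
    using assms unfolding eventually_periodic_def period_from_def by blast
  then have "\<exists>N. period_from X N (least_period X)"
    unfolding least_period_def by (rule LeastI_ex)
  then show ?thesis
    unfolding period_threshold_def by (rule someI_ex)
qed

text \<open>Never give \<open>period_from_def\<close> to the simplifier together with a \<open>period_from\<close> fact:
  the equivalence \<open>x \<in> X \<longleftrightarrow> x + c \<in> X\<close> then rewrites forever.\<close>

lemma period_fromD:
  "period_from X N c \<Longrightarrow> N \<le> x \<Longrightarrow> x \<in> X \<longleftrightarrow> x + c \<in> X"
  unfolding period_from_def by (elim conjE allE impE)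

lemma period_from_pos: "period_from X N c \<Longrightarrow> 1 \<le> c"
  unfolding period_from_def by (rule conjunct1)

lemma period_from_mult:
  assumes "period_from X N c" "N \<le> x"
  shows "x \<in> X \<longleftrightarrow> x + c * t \<in> X"
proof (induction t)
  case (Suc t)
  have "N \<le> x + c * t"
    using assms(2) by simp
  then have "x + c * t \<in> X \<longleftrightarrow> x + c * t + c \<in> X"
    using assms(1) period_fromD by blast
  also have "x + c * t + c = x + c * Suc t"
    by simp
  finally show ?case
    using Suc.IH by blast
qed simp

lemma period_from_cong:
  assumes "period_from X N c" "N \<le> x" "N \<le> y" "[x = y] (mod c)"
  shows "x \<in> X \<longleftrightarrow> y \<in> X"
proof -
  have ordered: "x \<in> X \<longleftrightarrow> y \<in> X" if "N \<le> y" "y \<le> x" "[x = y] (mod c)" for x y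
  proof -
    obtain t where t: "x = t * c + y"
      using cong_le_nat[OF \<open>y \<le> x\<close>] \<open>[x = y] (mod c)\<close> by blast
    have "y \<in> X \<longleftrightarrow> y + c * t \<in> X"
      using assms(1) \<open>N \<le> y\<close> by (rule period_from_mult)
    also have "y + c * t = x"
      using t by simp
    finally show ?thesis
      by blast
  qed
  show ?thesis
  proof (cases "y \<le> x")
    case True
    then show ?thesis
      by (rule ordered[OF assms(3) _ assms(4)])
  next
    case False
    then have "y \<in> X \<longleftrightarrow> x \<in> X"
      by (intro ordered[OF assms(2) _ cong_sym[OF assms(4)]]) simp
    then show ?thesis
      by (rule sym)
  qed
qed

lemma least_period_dvd:
  assumes "eventually_periodic X" "period_from X N d"
  shows "least_period X dvd d"
proof (rule ccontr)
  let ?p = "least_period X"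
  have p: "period_from X (period_threshold X) ?p"
    using assms(1) by (rule period_from_least_period)
  assume "\<not> ?p dvd d"
  then have e: "1 \<le> d mod ?p" "d mod ?p < ?p"
    using period_from_pos[OF p] by (auto simp: dvd_eq_mod_eq_0)
  have "period_from X (max N (period_threshold X)) (d mod ?p)"
    unfolding period_from_def
  proof (intro conjI allI impI)
    fix x assume x: "max N (period_threshold X) \<le> x"
    have "x + d \<in> X \<longleftrightarrow> x + d mod ?p \<in> X"
      by (rule period_from_cong[OF p]) (use x in \<open>auto simp: cong_def mod_add_right_eq\<close>)
    moreover have "x \<in> X \<longleftrightarrow> x + d \<in> X"
      using assms(2) x by (intro period_fromD) auto
    ultimately show "x \<in> X \<longleftrightarrow> x + d mod ?p \<in> X"
      by simp
  qed (use e in simp)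
  then have "?p \<le> d mod ?p"
    unfolding least_period_def by (intro Least_le) blast
  then show False
    using e by simp
qed

lemma purely_periodic_iff_period_from_0:
  "purely_periodic X \<longleftrightarrow> (\<exists>p. period_from X 0 p)"
proof
  assume "purely_periodic X"
  then obtain p R where pR: "1 \<le> p" "R \<subseteq> {0..<p}" "X = {r + p * k | r k. r \<in> R}"
    unfolding purely_periodic_def by blast
  have "x \<in> X \<longleftrightarrow> x mod p \<in> R" for x
  proof
    assume "x \<in> X"
    then obtain r k where "x = r + p * k" "r \<in> R"
      using pR(3) by blast
    then show "x mod p \<in> R"
      using pR(2) by auto
  next
    assume "x mod p \<in> R"
    moreover have "x = x mod p + p * (x div p)"
      by simp
    ultimately show "x \<in> X"
      unfolding pR(3) by blast
  qed
  then have "period_from X 0 p"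
    using pR(1) by (simp add: period_from_def)
  then show "\<exists>p. period_from X 0 p" ..
next
  assume "\<exists>p. period_from X 0 p"
  then obtain p where p: "period_from X 0 p" ..
  then have "1 \<le> p"
    by (rule period_from_pos)
  define R where "R = {r. r < p \<and> r \<in> X}"
  have mod_R: "x \<in> X \<longleftrightarrow> x mod p \<in> R" for x
  proof -
    have "x \<in> X \<longleftrightarrow> x mod p \<in> X"
      by (rule period_from_cong[OF p]) auto
    then show ?thesis
      using \<open>1 \<le> p\<close> unfolding R_def by simp
  qed
  have "X = {r + p * k | r k. r \<in> R}"
  proof (intro equalityI subsetI)
    fix x assume "x \<in> X"
    then have "x mod p \<in> R" "x = x mod p + p * (x div p)"
      using mod_R[of x] by simp_all
    then show "x \<in> {r + p * k | r k. r \<in> R}"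
      by blast
  next
    fix x assume "x \<in> {r + p * k | r k. r \<in> R}"
    then obtain r k where "x = r + p * k" "r \<in> R"
      by blast
    then show "x \<in> X"
      using mod_R[of x] by (simp add: R_def)
  qed
  moreover have "R \<subseteq> {0..<p}"
    by (auto simp: R_def)
  ultimately show "purely_periodic X"
    unfolding purely_periodic_def using \<open>1 \<le> p\<close> by blast
qed

lemma exists_add_cong_less:
  fixes p c x :: nat
  assumes "0 < p"
  shows "\<exists>r<p. [c + r = x] (mod p)"
proof (intro exI conjI)
  define r where "r = (x + (p - 1) * c) mod p"
  show "r < p"
    using assms unfolding r_def by simp
  have "[c + r = c + (x + (p - 1) * c)] (mod p)"
    unfolding r_def by (simp add: cong_def mod_add_right_eq)
  also have "c + (x + (p - 1) * c) = x + p * c"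
    using assms by (cases p) simp_all
  also have "[x + p * c = x] (mod p)"
    by (simp add: cong_def)
  finally show "[c + r = x] (mod p)" .
qed

section \<open>The part of a period coprime to the base\<close>

text \<open>The least \<open>c\<close> with \<open>p dvd c * b ^ k\<close> is \<open>p\<close> stripped of all prime factors of \<open>b\<close>.\<close>

definition coprime_part :: "nat \<Rightarrow> nat \<Rightarrow> nat" where
  "coprime_part b p = (LEAST c. 1 \<le> c \<and> (\<exists>k. p dvd c * b ^ k))"

lemma coprime_part_pos_dvd:
  assumes "1 \<le> p"
  shows "1 \<le> coprime_part b p" "\<exists>k. p dvd coprime_part b p * b ^ k"
proof -
  have "1 \<le> p \<and> (\<exists>k. p dvd p * b ^ k)"
    using assms by auto
  then have "1 \<le> coprime_part b p \<and> (\<exists>k. p dvd coprime_part b p * b ^ k)"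
    unfolding coprime_part_def by (rule LeastI)
  then show "1 \<le> coprime_part b p" "\<exists>k. p dvd coprime_part b p * b ^ k"
    by blast+
qed

lemma coprime_part_le: "1 \<le> c \<Longrightarrow> p dvd c * b ^ k \<Longrightarrow> coprime_part b p \<le> c"
  unfolding coprime_part_def by (rule Least_le) blast

lemma coprime_part_dvd_iff:
  assumes "1 \<le> p"
  shows "(\<exists>k. p dvd c * b ^ k) \<longleftrightarrow> coprime_part b p dvd c"
proof
  let ?q = "coprime_part b p"
  obtain k where k: "p dvd ?q * b ^ k"
    using coprime_part_pos_dvd[OF assms] by blast
  {
    assume "coprime_part b p dvd c"
    then obtain t where "c = ?q * t" ..
    then have "p dvd c * b ^ k"
      using k by (simp add: ac_simps)
    then show "\<exists>k. p dvd c * b ^ k" ..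
  }
  assume "\<exists>k. p dvd c * b ^ k"
  then obtain k' where k': "p dvd c * b ^ k'" ..
  have "p dvd c * b ^ k' * b ^ k" "p dvd ?q * b ^ k * b ^ k'"
    using k k' by (simp_all add: dvd_mult2)
  then have "p dvd c * b ^ (k + k')" "p dvd ?q * b ^ (k + k')"
    by (simp_all add: power_add ac_simps)
  then have "p dvd gcd (c * b ^ (k + k')) (?q * b ^ (k + k'))"
    by simp
  then have "p dvd gcd c ?q * b ^ (k + k')"
    by (simp add: gcd_mult_right gcd.commute)
  moreover have "0 < gcd c ?q"
    using coprime_part_pos_dvd(1)[OF assms, of b] by simp
  ultimately have "?q \<le> gcd c ?q"
    by (intro coprime_part_le) (simp_all add: Suc_le_eq)
  then have "gcd c ?q = ?q"
    using coprime_part_pos_dvd(1)[OF assms, of b] by (simp add: antisym gcd_le2_nat)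
  then show "?q dvd c"
    by (metis gcd_dvd1)
qed

lemma coprime_coprime_part:
  assumes "1 \<le> p"
  shows "coprime (coprime_part b p) b"
proof (rule ccontr)
  let ?q = "coprime_part b p"
  define g where "g = gcd ?q b"
  assume "\<not> coprime ?q b"
  then have "1 < g"
    using coprime_part_pos_dvd(1)[OF assms, of b] unfolding g_def
    by (metis coprime_iff_gcd_eq_1 gcd_eq_0_iff less_one linorder_neqE_nat not_one_le_zero)
  obtain c where c: "?q = c * g"
    unfolding g_def by (metis dvd_mult_div_cancel gcd_dvd1 mult.commute)
  obtain k where "p dvd ?q * b ^ k"
    using coprime_part_pos_dvd(2)[OF assms] by blast
  moreover have "g * b ^ k dvd b ^ Suc k"
    unfolding g_def by (simp add: mult_dvd_mono)
  then have "?q * b ^ k dvd c * b ^ Suc k"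
    unfolding c by (simp add: mult.assoc)
  ultimately have "?q dvd c"
    using coprime_part_dvd_iff[OF assms] dvd_trans by blast
  moreover have "0 < c" "c < ?q"
    using c \<open>1 < g\<close> coprime_part_pos_dvd(1)[OF assms, of b] by (auto simp: Suc_le_eq)
  ultimately show False
    by (simp add: nat_dvd_not_less)
qed

section \<open>Automata with a 0-loop at the initial state\<close>

lemma ultimately_equivalent_uniform:
  assumes "finite Q" "\<forall>s\<in>Q. \<forall>s'\<in>Q. R s s' \<longrightarrow> ultimately_equivalent b delta s s'"
  shows "\<exists>M. \<forall>s\<in>Q. \<forall>s'\<in>Q. R s s' \<longrightarrow>
           (\<forall>u. is_word b u \<and> M \<le> length u \<longrightarrow> run delta s u = run delta s' u)"
proof -
  let ?P = "\<lambda>M y. R (fst y) (snd y) \<longrightarrow>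
              (\<forall>u. is_word b u \<and> M \<le> length u \<longrightarrow> run delta (fst y) u = run delta (snd y) u)"
  have "\<forall>y\<in>Q \<times> Q. eventually (\<lambda>M. ?P M y) sequentially"
  proof
    fix y assume y: "y \<in> Q \<times> Q"
    show "eventually (\<lambda>M. ?P M y) sequentially"
    proof (cases "R (fst y) (snd y)")
      case True
      then have "ultimately_equivalent b delta (fst y) (snd y)"
        using assms(2) y by auto
      then obtain m where "\<forall>u. is_word b u \<and> m \<le> length u \<longrightarrow> run delta (fst y) u = run delta (snd y) u"
        unfolding ultimately_equivalent_def by blast
      then show ?thesis
        unfolding eventually_sequentially by (intro exI[of _ m]) auto
    qed simp
  qed
  then have "eventually (\<lambda>M. \<forall>y\<in>Q \<times> Q. ?P M y) sequentially"
    using assms(1) by (intro eventually_ball_finite) auto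
  then obtain M where "\<forall>y\<in>Q \<times> Q. ?P M y"
    unfolding eventually_sequentially by blast
  then show ?thesis
    by auto
qed

locale zero_loop_dfa =
  fixes b :: nat and Q :: "'q set" and i :: 'q and delta :: "'q \<Rightarrow> nat \<Rightarrow> 'q" and F :: "'q set"
  assumes base: "1 < b"
    and minimal: "minimal_dfa b Q i delta F"
    and initial_zero_loop: "delta i 0 = i"
begin

definition reach :: "nat \<Rightarrow> 'q" where
  "reach n = run delta i (base_digits b n)"

lemma complete: "complete_dfa b Q i delta F"
  using minimal by (simp add: minimal_dfa_def)

lemma initial_in_states: "i \<in> Q"
  using complete by (simp add: complete_dfa_def)

lemma reach_0 [simp]: "reach 0 = i"
  by (simp add: reach_def base_digits.simps)

lemma reach_step:
  assumes "a < b"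
  shows "reach (n * b + a) = delta (reach n) a"
proof (cases "n * b + a = 0")
  case True
  then show ?thesis
    using base initial_zero_loop by simp
next
  case False
  then show ?thesis
    using base assms by (simp add: reach_def base_digits_step run_snoc)
qed

lemma reach_in_states: "reach n \<in> Q"
  unfolding reach_def using complete initial_in_states is_word_base_digits[OF base]
  by (rule run_in_states)

lemma run_reach: "is_word b u \<Longrightarrow> run delta (reach n) u = reach (n * b ^ length u + val b u)"
proof (induction u rule: rev_induct)
  case (snoc a u)
  then have "a < b" "is_word b u"
    by (auto simp: is_word_snoc)
  then show ?case
    using snoc.IH by (simp add: run_snoc val_snoc reach_step[symmetric] algebra_simps)
qed simp

lemma run_initial: "is_word b u \<Longrightarrow> run delta i u = reach (val b u)"
  using run_reach[of u 0] by simp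

lemma reach_surj: "s \<in> Q \<Longrightarrow> \<exists>n. reach n = s"
  using minimal run_initial unfolding minimal_dfa_def by metis

lemma run_reach_padded: "run delta (reach n) (padded_digits b k r) = reach (n * b ^ k + r mod b ^ k)"
  using run_reach[of "padded_digits b k r" n] is_word_padded_digits[of b k r] base
  by (simp add: val_padded_digits)

lemma run_reach_zeros: "run delta (reach n) (replicate j 0) = reach (n * b ^ j)"
proof -
  have "val b (replicate j 0) = 0"
    by (induction j) (simp_all add: val_Cons)
  moreover have "is_word b (replicate j 0)"
    using base by (auto simp: is_word_def)
  ultimately show ?thesis
    using run_reach by simp
qed

lemma reach_eqI:
  assumes "\<And>k v. v < b ^ k \<Longrightarrow> reach (m * b ^ k + v) \<in> F \<longleftrightarrow> reach (m' * b ^ k + v) \<in> F"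
  shows "reach m = reach m'"
proof (rule ccontr)
  assume "reach m \<noteq> reach m'"
  then obtain u where u: "is_word b u" "(run delta (reach m) u \<in> F) \<noteq> (run delta (reach m') u \<in> F)"
    using minimal reach_in_states unfolding minimal_dfa_def by blast
  then show False
    using assms[of "val b u" "length u"] val_less_power[OF u(1)] by (simp add: run_reach)
qed

lemma reach_eq_initial_iff:
  assumes "\<forall>s\<in>Q. \<forall>a<b. delta s a = i \<longrightarrow> s = i \<and> a = 0"
  shows "reach n = i \<longleftrightarrow> n = 0"
proof
  show "reach n = i \<Longrightarrow> n = 0"
  proof (induction n rule: less_induct)
    case (less n)
    have "delta (reach (n div b)) (n mod b) = i"
      using less.prems reach_step[of "n mod b" "n div b"] base by simp
    moreover have "n mod b < b"
      using base by simp
    ultimately have "reach (n div b) = i" "n mod b = 0"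
      using assms reach_in_states by blast+
    moreover have "n div b < n \<or> n = 0"
      using base by auto
    ultimately show "n = 0"
      using less.IH by (metis div_mult_mod_eq add_0_right mult_0)
  qed
qed simp

lemma pseudo_morphism_reach:
  assumes "pseudo_morphism_mod b Q i delta l phi"
  shows "phi (reach n) = n mod l"
proof (induction n rule: less_induct)
  case (less n)
  show ?case
  proof (cases "n = 0")
    case True
    then show ?thesis
      using assms by (simp add: pseudo_morphism_mod_def)
  next
    case False
    have "phi (reach n) = phi (delta (reach (n div b)) (n mod b))"
      using reach_step[of "n mod b" "n div b"] base by simp
    also have "\<dots> = (phi (reach (n div b)) * b + n mod b) mod l"
      using assms reach_in_states base by (simp add: pseudo_morphism_mod_def)
    also have "\<dots> = (n div b mod l * b + n mod b) mod l"
      using less.IH False base by simp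
    also have "\<dots> = (n div b * b + n mod b) mod l"
      by (metis mod_add_left_eq mod_mult_left_eq)
    also have "\<dots> = n mod l"
      by simp
    finally show ?thesis .
  qed
qed

lemma accepts_by_value_reach: "accepts_by_value b i delta F {n. reach n \<in> F}"
  unfolding accepts_by_value_def by (simp add: run_initial)

lemma accepts_by_value_reach_iff:
  "accepts_by_value b i delta F X \<Longrightarrow> reach n \<in> F \<longleftrightarrow> n \<in> X"
  unfolding accepts_by_value_def reach_def
  using is_word_base_digits[OF base] val_base_digits[OF base] by metis

lemma eventually_periodic_reach:
  assumes pm: "pseudo_morphism_mod b Q i delta l phi"
    and ue: "\<forall>s\<in>Q. \<forall>s'\<in>Q. s \<noteq> i \<and> s' \<noteq> i \<and> phi s = phi s' \<longrightarrow> ultimately_equivalent b delta s s'"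
    and no_in: "\<forall>s\<in>Q. \<forall>a<b. delta s a = i \<longrightarrow> s = i \<and> a = 0"
  shows "eventually_periodic {n. reach n \<in> F}"
proof -
  obtain M where M: "\<forall>s\<in>Q. \<forall>s'\<in>Q. s \<noteq> i \<and> s' \<noteq> i \<and> phi s = phi s' \<longrightarrow>
      (\<forall>u. is_word b u \<and> M \<le> length u \<longrightarrow> run delta s u = run delta s' u)"
    using ultimately_equivalent_uniform[OF _ ue] complete by (auto simp: complete_dfa_def)
  have "1 \<le> l"
    using pm by (simp add: pseudo_morphism_mod_def)
  have shift: "reach x = reach (x + l * b ^ M)" if "b ^ M \<le> x" for x
  proof -
    define m where "m = x div b ^ M"
    have "1 \<le> m"
      using that base unfolding m_def by (simp add: Suc_le_eq div_greater_zero_iff)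
    then have "reach m \<noteq> i" "reach (m + l) \<noteq> i"
      using reach_eq_initial_iff[OF no_in] by auto
    moreover have "phi (reach m) = phi (reach (m + l))"
      using pseudo_morphism_reach[OF pm] by simp
    moreover have "is_word b (padded_digits b M x)"
      using base by (simp add: is_word_padded_digits)
    ultimately have "run delta (reach m) (padded_digits b M x) = run delta (reach (m + l)) (padded_digits b M x)"
      using M reach_in_states by simp
    then show ?thesis
      unfolding run_reach_padded m_def by (simp add: algebra_simps)
  qed
  have "1 \<le> l * b ^ M"
    using \<open>1 \<le> l\<close> base by simp
  then show ?thesis
    unfolding eventually_periodic_def using shift by (metis mem_Collect_eq)
qed

lemma not_purely_periodic_reach:
  assumes no_in: "\<forall>s\<in>Q. \<forall>a<b. delta s a = i \<longrightarrow> s = i \<and> a = 0"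
  shows "\<not> purely_periodic {n. reach n \<in> F}"
proof
  assume "purely_periodic {n. reach n \<in> F}"
  then obtain p where p: "period_from {n. reach n \<in> F} 0 p"
    unfolding purely_periodic_iff_period_from_0 ..
  have "reach (p * b ^ k + v) \<in> F \<longleftrightarrow> reach (0 * b ^ k + v) \<in> F" for k v
    using period_from_mult[OF p, of v "b ^ k"] by (simp add: ac_simps)
  then have "reach p = reach 0"
    by (rule reach_eqI)
  then show False
    using reach_eq_initial_iff[OF no_in] period_from_pos[OF p] by simp
qed

end

section \<open>Automata accepting an impurely periodic set\<close>

locale periodic_acceptance = zero_loop_dfa b Q i delta F
  for b :: nat and Q :: "'q set" and i :: 'q and delta :: "'q \<Rightarrow> nat \<Rightarrow> 'q" and F :: "'q set" +
  fixes X :: "nat set"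
  assumes reach_final_iff: "reach n \<in> F \<longleftrightarrow> n \<in> X"
    and impurely_periodic: "impurely_periodic X"
begin

abbreviation "p \<equiv> least_period X"
abbreviation "N \<equiv> period_threshold X"
abbreviation "q \<equiv> coprime_part b p"

lemma period: "period_from X N p"
  using impurely_periodic by (simp add: impurely_periodic_def period_from_least_period)

lemma period_pos: "1 \<le> p"
  using period by (rule period_from_pos)

lemma q_pos: "1 \<le> q"
  using coprime_part_pos_dvd(1)[OF period_pos] .

lemma reach_cong:
  assumes "N \<le> a" "N \<le> a'" "[a = a'] (mod p)"
  shows "reach a = reach a'"
proof (rule reach_eqI)
  fix k v
  have "1 \<le> b ^ k"
    using base by simp
  then have "a \<le> a * b ^ k" "a' \<le> a' * b ^ k"
    by simp_all
  then have "N \<le> a * b ^ k + v" "N \<le> a' * b ^ k + v"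
    using assms(1,2) by linarith+
  moreover have "[a * b ^ k + v = a' * b ^ k + v] (mod p)"
    using assms(3) by (intro cong_add cong_scalar_right) simp_all
  ultimately have "a * b ^ k + v \<in> X \<longleftrightarrow> a' * b ^ k + v \<in> X"
    by (rule period_from_cong[OF period])
  then show "reach (a * b ^ k + v) \<in> F \<longleftrightarrow> reach (a' * b ^ k + v) \<in> F"
    by (simp add: reach_final_iff)
qed

lemma reach_eq_imp_mem_iff:
  assumes "reach m = reach m'" "v < b ^ K"
  shows "m * b ^ K + v \<in> X \<longleftrightarrow> m' * b ^ K + v \<in> X"
proof -
  have "reach (m * b ^ K + v) = reach (m' * b ^ K + v)"
    using run_reach_padded[of m K v] run_reach_padded[of m' K v] assms by simp
  then show ?thesis
    by (simp add: reach_final_iff[symmetric])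
qed

text \<open>Reading a nonzero \<open>m\<close> that leads back to \<open>i\<close> is invisible to \<open>X\<close>:
  \<open>m * b ^ K + x \<in> X \<longleftrightarrow> x \<in> X\<close> for \<open>x < b ^ K\<close>. For large \<open>K\<close> this pushes \<open>x\<close> past the
  threshold \<open>N\<close>, so \<open>p\<close> becomes a period from \<open>0\<close> on.\<close>

lemma reach_eq_initial_imp_zero:
  assumes "reach m = i"
  shows "m = 0"
proof (rule ccontr)
  assume "m \<noteq> 0"
  have shift: "x \<in> X \<longleftrightarrow> x + p \<in> X" for x
  proof -
    define K where "K = x + p + N"
    have K: "K < b ^ K"
      using base by (simp add: power_gt_expt)
    have prefix: "m * b ^ K + v \<in> X \<longleftrightarrow> v \<in> X" if "v < b ^ K" for v
      using reach_eq_imp_mem_iff[of m 0 v K] assms that by simp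
    have "b ^ K \<le> m * b ^ K"
      using \<open>m \<noteq> 0\<close> by simp
    then have "N \<le> m * b ^ K + x"
      using K unfolding K_def by linarith
    have "x \<in> X \<longleftrightarrow> m * b ^ K + x \<in> X"
      using K by (intro prefix[symmetric]) (simp add: K_def)
    also have "\<dots> \<longleftrightarrow> m * b ^ K + (x + p) \<in> X"
      using period_fromD[OF period \<open>N \<le> m * b ^ K + x\<close>] by (simp add: add.assoc)
    also have "\<dots> \<longleftrightarrow> x + p \<in> X"
      using K by (intro prefix) (simp add: K_def)
    finally show ?thesis .
  qed
  have "period_from X 0 p"
    unfolding period_from_def using period_pos shift by blast
  then show False
    using impurely_periodic by (auto simp: impurely_periodic_def purely_periodic_iff_period_from_0)
qed

lemma no_transition_to_initial: "\<forall>s\<in>Q. \<forall>a<b. delta s a = i \<longrightarrow> s = i \<and> a = 0"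
proof (intro ballI allI impI)
  fix s a assume "s \<in> Q" "a < b" "delta s a = i"
  then obtain n where "reach n = s"
    using reach_surj by blast
  then have "reach (n * b + a) = i"
    using \<open>a < b\<close> \<open>delta s a = i\<close> by (simp add: reach_step)
  then have "n * b + a = 0"
    by (rule reach_eq_initial_imp_zero)
  then show "s = i \<and> a = 0"
    using \<open>reach n = s\<close> base by simp
qed

text \<open>Equal states at \<open>m' < m\<close> turn \<open>(m - m') * b ^ K\<close> into an eventual period of
  \<open>X\<close>: any residue class mod \<open>p\<close> can be reached from \<open>m' * b ^ K\<close> by appending \<open>K\<close> digits.\<close>

lemma reach_eq_imp_dvd_mult_power:
  assumes "1 \<le> m'" "m' < m" "reach m = reach m'"
  shows "\<exists>k. p dvd (m - m') * b ^ k"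
proof -
  define K where "K = p + N"
  define c where "c = m' * b ^ K"
  define D where "D = (m - m') * b ^ K"
  have K: "K < b ^ K"
    using base by (simp add: power_gt_expt)
  have "b ^ K \<le> c"
    using assms(1) unfolding c_def by simp
  then have "N \<le> c"
    using K unfolding K_def by linarith
  have "m * b ^ K = c + D"
    using assms(2) unfolding c_def D_def by (simp add: diff_mult_distrib)
  have "period_from X N D"
    unfolding period_from_def
  proof (intro conjI allI impI)
    show "1 \<le> D"
      using assms(2) base unfolding D_def by simp
    fix x assume "N \<le> x"
    obtain r where "r < p" and r: "[c + r = x] (mod p)"
      using exists_add_cong_less period_pos by (metis less_le_trans zero_less_one)
    then have "r < b ^ K"
      using K unfolding K_def by linarith
    have "x \<in> X \<longleftrightarrow> c + r \<in> X"
      using period_from_cong[OF period \<open>N \<le> x\<close> _ cong_sym[OF r]] \<open>N \<le> c\<close> by simp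
    also have "\<dots> \<longleftrightarrow> c + r + D \<in> X"
      using reach_eq_imp_mem_iff[OF assms(3) \<open>r < b ^ K\<close>] \<open>m * b ^ K = c + D\<close>
      unfolding c_def by (simp add: ac_simps)
    also have "\<dots> \<longleftrightarrow> x + D \<in> X"
      using period_from_cong[OF period _ _ cong_add[OF r cong_refl]] \<open>N \<le> x\<close> \<open>N \<le> c\<close> by simp
    finally show "x \<in> X \<longleftrightarrow> x + D \<in> X" .
  qed
  then have "p dvd D"
    using impurely_periodic by (intro least_period_dvd) (simp_all add: impurely_periodic_def)
  then show ?thesis
    unfolding D_def by blast
qed

lemma reach_eq_imp_cong:
  assumes "reach m = reach m'"
  shows "[m = m'] (mod q)"
proof -
  have ordered: "[m = m'] (mod q)" if lt: "m' < m" and eq: "reach m = reach m'" for m m'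
  proof (cases "m' = 0")
    case True
    then have "m = 0"
      using eq by (intro reach_eq_initial_imp_zero) simp
    then show ?thesis
      using lt by simp
  next
    case False
    then have "\<exists>k. p dvd (m - m') * b ^ k"
      using lt eq by (intro reach_eq_imp_dvd_mult_power) simp_all
    then have "q dvd m - m'"
      using coprime_part_dvd_iff[OF period_pos] by blast
    then show ?thesis
      using lt by (simp add: cong_altdef_nat)
  qed
  consider "m' < m" | "m < m'" | "m = m'"
    by linarith
  then show ?thesis
  proof cases
    case 2
    show ?thesis
      using ordered[OF 2 assms[symmetric]] by (rule cong_sym)
  qed (use ordered assms in simp_all)
qed

definition stable_length :: nat where
  "stable_length = N + (SOME k. p dvd q * b ^ k)"

lemma reach_shift_cong:
  assumes "1 \<le> m" "1 \<le> m'" "[m = m'] (mod q)" "stable_length \<le> L"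
  shows "reach (m * b ^ L + v) = reach (m' * b ^ L + v)"
proof (rule reach_cong)
  define k where "k = (SOME k. p dvd q * b ^ k)"
  have "p dvd q * b ^ k"
    unfolding k_def using coprime_part_pos_dvd(2)[OF period_pos] by (rule someI_ex)
  moreover have "q * b ^ k dvd q * b ^ L"
    using assms(4) unfolding stable_length_def k_def by (simp add: le_imp_power_dvd)
  ultimately have "p dvd q * b ^ L"
    by (rule dvd_trans)
  moreover have "[m * b ^ L = m' * b ^ L] (mod q * b ^ L)"
    using assms(3) by (simp add: cong_def mod_mult_mult2)
  ultimately show "[m * b ^ L + v = m' * b ^ L + v] (mod p)"
    by (intro cong_add cong_refl) (rule cong_dvd_modulus_nat)
  have L: "L < b ^ L"
    using base by (simp add: power_gt_expt)
  have "N \<le> L"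
    using assms(4) unfolding stable_length_def by simp
  moreover have "b ^ L \<le> m * b ^ L" "b ^ L \<le> m' * b ^ L"
    using assms(1,2) by simp_all
  ultimately show "N \<le> m * b ^ L + v" "N \<le> m' * b ^ L + v"
    using L by linarith+
qed

definition residue :: "'q \<Rightarrow> nat" where
  "residue s = (SOME n. reach n = s) mod q"

lemma residue_reach: "residue (reach n) = n mod q"
proof -
  have "reach (SOME k. reach k = reach n) = reach n"
    by (rule someI_ex) blast
  then show ?thesis
    unfolding residue_def using reach_eq_imp_cong cong_def by blast
qed

lemma pseudo_morphism_residue: "pseudo_morphism_mod b Q i delta q residue"
  unfolding pseudo_morphism_mod_def
proof (intro conjI ballI allI impI)
  show "1 \<le> q"
    by (rule q_pos)
  show "residue i = 0"
    using residue_reach[of 0] by simp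
  fix s assume "s \<in> Q"
  then obtain n where n: "reach n = s"
    using reach_surj by blast
  show "residue s < q"
    using q_pos unfolding n[symmetric] residue_reach by simp
  fix a assume "a < b"
  then have "residue (delta s a) = (n * b + a) mod q"
    unfolding n[symmetric] by (simp add: reach_step[symmetric] residue_reach)
  also have "\<dots> = (n mod q * b + a) mod q"
    by (metis mod_add_left_eq mod_mult_left_eq)
  finally show "residue (delta s a) = (residue s * b + a) mod q"
    unfolding n[symmetric] residue_reach .
qed

lemma reach_ne_initial_imp_pos: "reach n \<noteq> i \<Longrightarrow> 1 \<le> n"
  by (cases n) simp_all

lemma residue_ultimately_equivalent:
  assumes "s \<in> Q" "s' \<in> Q" "s \<noteq> i" "s' \<noteq> i" "residue s = residue s'"
  shows "ultimately_equivalent b delta s s'"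
proof -
  obtain n n' where n: "reach n = s" and n': "reach n' = s'"
    using reach_surj assms(1,2) by metis
  then have pos: "1 \<le> n" "1 \<le> n'"
    using assms(3,4) reach_ne_initial_imp_pos by blast+
  have cong: "[n = n'] (mod q)"
    using assms(5) unfolding n[symmetric] n'[symmetric] residue_reach by (simp add: cong_def)
  show ?thesis
    unfolding ultimately_equivalent_def
  proof (intro exI[of _ "stable_length + 1"] conjI allI impI)
    fix u assume "is_word b u \<and> stable_length + 1 \<le> length u"
    then show "run delta s u = run delta s' u"
      unfolding n[symmetric] n'[symmetric] using reach_shift_cong[OF pos cong] by (simp add: run_reach)
  qed simp
qed

lemma reach_zero_circuit_iterate:
  assumes "reach n \<in> zero_circuit_states Q delta"
  obtains j where "1 \<le> j" "\<And>t. reach (n * b ^ (j * t)) = reach n"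
proof -
  obtain j where "1 \<le> j" "run delta (reach n) (replicate j 0) = reach n"
    using assms unfolding zero_circuit_states_def by blast
  then show ?thesis
    using that run_replicate_mult by (metis run_reach_zeros)
qed

lemma inj_on_residue_zero_circuit: "inj_on residue (zero_circuit_states Q delta - {i})"
proof (rule inj_onI)
  fix s s' assume s: "s \<in> zero_circuit_states Q delta - {i}"
    and s': "s' \<in> zero_circuit_states Q delta - {i}" and eq: "residue s = residue s'"
  obtain n n' where n: "reach n = s" and n': "reach n' = s'"
    using reach_surj s s' unfolding zero_circuit_states_def by blast
  then have pos: "1 \<le> n" "1 \<le> n'"
    using s s' reach_ne_initial_imp_pos by blast+
  have cong: "[n = n'] (mod q)"
    using eq unfolding n[symmetric] n'[symmetric] residue_reach by (simp add: cong_def)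
  obtain j where j: "1 \<le> j" "\<And>t. reach (n * b ^ (j * t)) = reach n"
    using reach_zero_circuit_iterate s n by blast
  obtain j' where j': "1 \<le> j'" "\<And>t. reach (n' * b ^ (j' * t)) = reach n'"
    using reach_zero_circuit_iterate s' n' by blast
  define L where "L = j * j' * stable_length"
  have "stable_length \<le> L"
    using j(1) j'(1) unfolding L_def by simp
  have "s = reach (n * b ^ L)"
    using j(2)[of "j' * stable_length"] n unfolding L_def by (simp add: mult.assoc)
  also have "\<dots> = reach (n' * b ^ L)"
    using reach_shift_cong[OF pos cong \<open>stable_length \<le> L\<close>, of 0] by simp
  also have "\<dots> = s'"
    using j'(2)[of "j * stable_length"] n' unfolding L_def by (simp add: ac_simps)
  finally show "s = s'" .
qed

lemma power_totient_cong_one: "[b ^ totient q = 1] (mod q)"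
  using coprime_coprime_part[OF period_pos] by (intro euler_theorem) (simp add: coprime_commute)

text \<open>The residue \<open>r\<close> is realised on a 0-circuit by \<open>(r + q) * b ^ L\<close>, where \<open>L\<close> is a large
  multiple of \<open>totient q\<close>, so that \<open>b ^ L\<close> is \<open>1\<close> mod \<open>q\<close> and appending \<open>totient q\<close> zeros
  changes neither the residue nor, by \<open>reach_shift_cong\<close>, the state.\<close>

lemma residue_zero_circuit_surj: "{0..<q} \<subseteq> residue ` (zero_circuit_states Q delta - {i})"
proof
  fix r assume r: "r \<in> {0..<q}"
  define e where "e = totient q"
  define n where "n = r + q"
  define L where "L = e * stable_length"
  define s where "s = reach (n * b ^ L)"
  have e: "1 \<le> e" "[b ^ e = 1] (mod q)"
    unfolding e_def using q_pos power_totient_cong_one by (simp_all add: Suc_le_eq)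
  have "1 \<le> n"
    using q_pos unfolding n_def by simp
  have "stable_length \<le> L"
    using e(1) unfolding L_def by simp
  have "[n * b ^ e = n] (mod q)"
    using cong_scalar_left[OF e(2)] by simp
  then have "reach (n * b ^ e * b ^ L + 0) = reach (n * b ^ L + 0)"
    using \<open>1 \<le> n\<close> e(1) \<open>stable_length \<le> L\<close> base
    by (intro reach_shift_cong) (simp_all add: Suc_le_eq)
  then have "run delta s (replicate e 0) = s"
    unfolding s_def run_reach_zeros by (simp add: ac_simps power_add)
  then have "s \<in> zero_circuit_states Q delta"
    unfolding zero_circuit_states_def using e(1) reach_in_states s_def by blast
  moreover have "s \<noteq> i"
    unfolding s_def using \<open>1 \<le> n\<close> base reach_eq_initial_imp_zero by fastforce
  moreover have "residue s = r"
  proof -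
    have "[b ^ L = 1] (mod q)"
      using cong_pow[OF e(2), of stable_length] unfolding L_def by (simp add: power_mult)
    then have "[n * b ^ L = n] (mod q)"
      using cong_scalar_left by fastforce
    then show ?thesis
      using r unfolding s_def residue_reach n_def by (simp add: cong_def)
  qed
  ultimately show "r \<in> residue ` (zero_circuit_states Q delta - {i})"
    by blast
qed

lemma card_zero_circuit_states: "card (zero_circuit_states Q delta) = q + 1"
proof -
  let ?Z = "zero_circuit_states Q delta"
  have "finite ?Z"
    using complete unfolding complete_dfa_def zero_circuit_states_def by simp
  have "i \<in> ?Z"
    using initial_in_states initial_zero_loop unfolding zero_circuit_states_def
    by (intro CollectI conjI exI[of _ 1]) (simp_all add: run_def)
  have "residue ` (?Z - {i}) \<subseteq> {0..<q}"
    using pseudo_morphism_residue unfolding pseudo_morphism_mod_def zero_circuit_states_def by auto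
  then have "bij_betw residue (?Z - {i}) {0..<q}"
    unfolding bij_betw_def using inj_on_residue_zero_circuit residue_zero_circuit_surj by blast
  then have "card (?Z - {i}) = q"
    by (simp add: bij_betw_same_card)
  moreover have "1 \<le> card ?Z"
    using \<open>finite ?Z\<close> \<open>i \<in> ?Z\<close> by (simp add: Suc_le_eq card_gt_0_iff) blast
  ultimately show ?thesis
    using \<open>finite ?Z\<close> \<open>i \<in> ?Z\<close> by (simp add: card_Diff_singleton)
qed

end

lemma accepts_by_value_imp_initial_zero_loop:
  assumes "1 < b" "minimal_dfa b Q i delta F" "accepts_by_value b i delta F X"
  shows "delta i 0 = i"
proof (rule ccontr)
  assume "delta i 0 \<noteq> i"
  moreover have "i \<in> Q" "delta i 0 \<in> Q"
    using assms(1,2) by (simp_all add: minimal_dfa_def complete_dfa_def)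
  ultimately obtain u where u: "is_word b u" "(run delta (delta i 0) u \<in> F) \<noteq> (run delta i u \<in> F)"
    using assms(2) unfolding minimal_dfa_def by blast
  have "is_word b (0 # u)"
    using u(1) assms(1) by (simp add: is_word_def)
  then have "run delta i (0 # u) \<in> F \<longleftrightarrow> val b (0 # u) \<in> X"
    using assms(3) unfolding accepts_by_value_def by blast
  then have "run delta (delta i 0) u \<in> F \<longleftrightarrow> val b (0 # u) \<in> X"
    by (simp add: run_def)
  moreover have "run delta i u \<in> F \<longleftrightarrow> val b u \<in> X"
    using assms(3) u(1) unfolding accepts_by_value_def by simp
  ultimately show False
    using u(2) by (simp add: val_Cons)
qed

lemma impurely_periodic_acceptance_imp_conditions:
  assumes "1 < b" "minimal_dfa b Q i delta F" "card (zero_circuit_states Q delta) = l + 1"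
    and "\<exists>X. impurely_periodic X \<and> accepts_by_value b i delta F X"
  shows "(\<exists>phi. pseudo_morphism_mod b Q i delta l phi \<and>
            (\<forall>s\<in>Q. \<forall>s'\<in>Q. s \<noteq> i \<and> s' \<noteq> i \<and> phi s = phi s' \<longrightarrow>
               ultimately_equivalent b delta s s')) \<and>
         delta i 0 = i \<and> (\<forall>s\<in>Q. \<forall>a<b. delta s a = i \<longrightarrow> s = i \<and> a = 0)"
proof -
  obtain X where X: "impurely_periodic X" "accepts_by_value b i delta F X"
    using assms(4) by blast
  have "delta i 0 = i"
    using assms(1,2) X(2) by (rule accepts_by_value_imp_initial_zero_loop)
  then interpret zero_loop_dfa b Q i delta F
    using assms(1,2) by unfold_locales
  interpret periodic_acceptance b Q i delta F X
    using X accepts_by_value_reach_iff by unfold_locales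
  have "l = q"
    using card_zero_circuit_states assms(3) by simp
  then show ?thesis
    using pseudo_morphism_residue residue_ultimately_equivalent initial_zero_loop
      no_transition_to_initial by (intro conjI exI[of _ residue]) simp_all
qed

lemma conditions_imp_impurely_periodic_acceptance:
  assumes "1 < b" "minimal_dfa b Q i delta F"
    and "(\<exists>phi. pseudo_morphism_mod b Q i delta l phi \<and>
            (\<forall>s\<in>Q. \<forall>s'\<in>Q. s \<noteq> i \<and> s' \<noteq> i \<and> phi s = phi s' \<longrightarrow>
               ultimately_equivalent b delta s s')) \<and>
         delta i 0 = i \<and> (\<forall>s\<in>Q. \<forall>a<b. delta s a = i \<longrightarrow> s = i \<and> a = 0)"
  shows "\<exists>X. impurely_periodic X \<and> accepts_by_value b i delta F X"
proof -
  interpret zero_loop_dfa b Q i delta F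
    using assms by unfold_locales blast+
  obtain phi where "pseudo_morphism_mod b Q i delta l phi"
    "\<forall>s\<in>Q. \<forall>s'\<in>Q. s \<noteq> i \<and> s' \<noteq> i \<and> phi s = phi s' \<longrightarrow> ultimately_equivalent b delta s s'"
    using assms(3) by blast
  then have "impurely_periodic {n. reach n \<in> F}"
    unfolding impurely_periodic_def
    using eventually_periodic_reach not_purely_periodic_reach assms(3) by simp
  then show ?thesis
    using accepts_by_value_reach by blast
qed

theorem theorem44:
  fixes b :: nat and Q :: "'q set" and i :: 'q and delta :: "'q \<Rightarrow> nat \<Rightarrow> 'q" and F :: "'q set"
  assumes "b > 1"
    and "minimal_dfa b Q i delta F"
    and "card (zero_circuit_states Q delta) = l + 1"
  shows "(\<exists>X. impurely_periodic X \<and> accepts_by_value b i delta F X) \<longleftrightarrow>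
    ((\<exists>phi. pseudo_morphism_mod b Q i delta l phi \<and>
        (\<forall>s\<in>Q. \<forall>s'\<in>Q. s \<noteq> i \<and> s' \<noteq> i \<and> phi s = phi s' \<longrightarrow>
           ultimately_equivalent b delta s s')) \<and>
     delta i 0 = i \<and>
     (\<forall>s\<in>Q. \<forall>a<b. delta s a = i \<longrightarrow> s = i \<and> a = 0))"
  using impurely_periodic_acceptance_imp_conditions[OF assms]
    conditions_imp_impurely_periodic_acceptance[OF assms(1,2)] by (rule iffI)

end
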